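(* Let $G=(V,E_1,\dots,E_k)$ be a complete edge-colored graph. Then the following statements are equivalent: (i) $G$ is a complete edge-colored permutation graph, i.e., there exists a labeling $\ell$ of $G$ such that for each monochromatic subgraph $G_{|i}$ of $G$, $(G_{|i},\ell)$ is a simple permutation graph. (ii) Each induced subgraph of $G$ is a complete edge-colored permutation graph. (iii) For each strong module $M$ of $G$, the quotient graph $G[M]/\mathbb{P}_{\max}(M)$ is a complete edge-colored permutation graph. (iv) For each strong prime module $M$ of $G$, the quotient graph $G[M]/\mathbb{P}_{\max}(M)$ is a complete edge-colored permutation graph; in particular, the quotient graph of each strong prime module on at least three vertices is $2$-edge-colored. (v) Each monochromatic subgraph $G_{|i}$ of $G$, together with some labeling (possibly depending on $i$ and different from the one in (i)), is a simple permutation graph, and $G$ does not contain a rainbow triangle.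
   Context: All graphs are finite, simple and undirected; $[n]=\{1,\dots,n\}$. A permutation of length $n$ is a bijection $\pi:[n]\to[n]$. A labeling of a graph with vertex set $V$ is a bijection $\ell:V\to[|V|]$. A graph $H=(V,E)$ together with a labeling $\ell$ is a (simple) permutation graph of a permutation $\pi$ of length $|V|$ if for all $u,v\in V$ with $\ell(u)>\ell(v)$: $\{u,v\}\in E$ iff $\pi^{-1}(\ell(u))<\pi^{-1}(\ell(v))$; $H$ is a simple permutation graph if such $\ell,\pi$ exist. A complete $k$-edge-colored graph $G=(V,E_1,\dots,E_k)$ is the complete graph on $V$ whose edge set is partitioned into $k$ nonempty color classes $E_1,\dots,E_k$ (edge $e\in E_i$ has color $i$); the one-vertex graph is also regarded as a complete edge-colored graph. The $i$-th monochromatic subgraph is $G_{|i}=(V,E_i)$. Induced subgraphs keep the colors of their edges (and may use fewer colors). $G$ is a complete edge-colored permutation graph if there are a labeling $\ell$ and permutations $\pi_1,\dots,\pi_k$ such that $(G_{|i},\ell)$ is a simple permutation graph of $\pi_i$ for each $i$. A rainbow triangle is a set of three vertices whose three edges have pairwise distinct colors. A module of $G$ is a set $M\subseteq V$ such that for every $v\in V\setminus M$ all edges $\{u,v\}$ with $u\in M$ have the same color. A strong module is a nonempty module $M$ such that every module $M'$ satisfies $M\subseteq M'$, $M'\subseteq M$ or $M\cap M'=\emptyset$. For a strong module $M$ with $|M|\ge 2$, $\mathbb{P}_{\max}(M)$ is the set of inclusion-maximal strong modules properly contained in $M$ (it partitions $M$); the quotient graph $G[M]/\mathbb{P}_{\max}(M)$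 is the complete graph on vertex set $\mathbb{P}_{\max}(M)$ in which the edge $\{M_a,M_b\}$ gets the (common) color of all edges $\{u,v\}$ with $u\in M_a$, $v\in M_b$. For $|M|=1$ the quotient graph is the one-vertex graph. A strong module $M$ is series if its quotient graph has at least two vertices and all its edges have the same color, and prime otherwise. *)

theory Defs
  imports Main
begin

text \<open>A complete edge-colored graph is given by a finite nonempty vertex set V and a
  symmetric colouring c of the edges (c u v is the colour of the edge {u,v}, u \<noteq> v).
  Its colours are exactly those actually used, so every colour class is nonempty.\<close>

definition ecg :: "'a set \<Rightarrow> ('a \<Rightarrow> 'a \<Rightarrow> 'c) \<Rightarrow> bool" where
  "ecg V c \<longleftrightarrow> finite V \<and> V \<noteq> {} \<and> (\<forall>u\<in>V. \<forall>v\<in>V. c u v = c v u)"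

definition colors :: "'a set \<Rightarrow> ('a \<Rightarrow> 'a \<Rightarrow> 'c) \<Rightarrow> 'c set" where
  "colors V c = {c u v | u v. u \<in> V \<and> v \<in> V \<and> u \<noteq> v}"

definition mono_edges :: "('a \<Rightarrow> 'a \<Rightarrow> 'c) \<Rightarrow> 'c \<Rightarrow> 'a \<Rightarrow> 'a \<Rightarrow> bool" where
  "mono_edges c i u v \<longleftrightarrow> u \<noteq> v \<and> c u v = i"

definition perm_graph_of :: "'a set \<Rightarrow> ('a \<Rightarrow> 'a \<Rightarrow> bool) \<Rightarrow> ('a \<Rightarrow> nat) \<Rightarrow> (nat \<Rightarrow> nat) \<Rightarrow> bool" where
  "perm_graph_of V E l pi \<longleftrightarrow>
     bij_betw l V {1..card V} \<and> bij_betw pi {1..card V} {1..card V} \<and>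
     (\<forall>u\<in>V. \<forall>v\<in>V. l u > l v \<longrightarrow>
        (E u v \<longleftrightarrow> inv_into {1..card V} pi (l u) < inv_into {1..card V} pi (l v)))"

definition simple_perm_graph :: "'a set \<Rightarrow> ('a \<Rightarrow> 'a \<Rightarrow> bool) \<Rightarrow> bool" where
  "simple_perm_graph V E \<longleftrightarrow> (\<exists>l pi. perm_graph_of V E l pi)"

definition ce_perm_graph :: "'a set \<Rightarrow> ('a \<Rightarrow> 'a \<Rightarrow> 'c) \<Rightarrow> bool" where
  "ce_perm_graph V c \<longleftrightarrow>
     (\<exists>l. \<forall>i\<in>colors V c. \<exists>pi. perm_graph_of V (mono_edges c i) l pi)"

definition rainbow_triangle :: "'a set \<Rightarrow> ('a \<Rightarrow> 'a \<Rightarrow> 'c) \<Rightarrow> 'a \<Rightarrow> 'a \<Rightarrow> 'a \<Rightarrow> bool" where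
  "rainbow_triangle V c x y z \<longleftrightarrow> x \<in> V \<and> y \<in> V \<and> z \<in> V \<and> x \<noteq> y \<and> y \<noteq> z \<and> x \<noteq> z \<and>
     c x y \<noteq> c y z \<and> c x y \<noteq> c x z \<and> c y z \<noteq> c x z"

definition is_module :: "'a set \<Rightarrow> ('a \<Rightarrow> 'a \<Rightarrow> 'c) \<Rightarrow> 'a set \<Rightarrow> bool" where
  "is_module V c M \<longleftrightarrow> M \<subseteq> V \<and> (\<forall>v\<in>V - M. \<forall>u\<in>M. \<forall>u'\<in>M. c u v = c u' v)"

definition strong_module :: "'a set \<Rightarrow> ('a \<Rightarrow> 'a \<Rightarrow> 'c) \<Rightarrow> 'a set \<Rightarrow> bool" where
  "strong_module V c M \<longleftrightarrow> M \<noteq> {} \<and> is_module V c M \<and>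
     (\<forall>M'. is_module V c M' \<longrightarrow> M \<subseteq> M' \<or> M' \<subseteq> M \<or> M \<inter> M' = {})"

definition Pmax :: "'a set \<Rightarrow> ('a \<Rightarrow> 'a \<Rightarrow> 'c) \<Rightarrow> 'a set \<Rightarrow> 'a set set" where
  "Pmax V c M = {N. strong_module V c N \<and> N \<subset> M \<and>
      (\<forall>N'. strong_module V c N' \<and> N' \<subset> M \<and> N \<subseteq> N' \<longrightarrow> N' = N)}"

definition quot_vertices :: "'a set \<Rightarrow> ('a \<Rightarrow> 'a \<Rightarrow> 'c) \<Rightarrow> 'a set \<Rightarrow> 'a set set" where
  "quot_vertices V c M = (if card M = 1 then {M} else Pmax V c M)"

text \<open>Colour of the quotient edge {A,B}: the common colour of the edges between A and B.\<close>
definition quot_color :: "('a \<Rightarrow> 'a \<Rightarrow> 'c) \<Rightarrow> 'a set \<Rightarrow> 'a set \<Rightarrow> 'c" where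
  "quot_color c A B = c (SOME u. u \<in> A) (SOME v. v \<in> B)"

definition prime_module :: "'a set \<Rightarrow> ('a \<Rightarrow> 'a \<Rightarrow> 'c) \<Rightarrow> 'a set \<Rightarrow> bool" where
  "prime_module V c M \<longleftrightarrow> strong_module V c M \<and>
     \<not> (card (quot_vertices V c M) \<ge> 2 \<and>
        (\<exists>col. \<forall>A\<in>quot_vertices V c M. \<forall>B\<in>quot_vertices V c M.
            A \<noteq> B \<longrightarrow> quot_color c A B = col))"

end

(*
  A labeling l makes (H, l) a permutation graph exactly when some second injective order p
  reverses l on the edges and preserves it on the non-edges; ranking both orders produces the
  bijections required by the definition, so any linear order may serve as label set.

  A labeling for G restricts to induced subgraphs and, through one representative per part, to
  quotients. It also excludes rainbow triangles: for l x < l y < l z the colour class of xz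
  forces c x z to be c x y or c y z.

  Conversely, let G be rainbow-free. By induction on the vertices, a rainbow-free colouring
  with at least three colours has a colour class that is disconnected. In the quotient of a
  strong module every colour class is connected: the union of the parts reached from a part A
  by edges of one colour is a strong module, so by maximality of A it is the whole module. Hence prime quotients on at least three vertices use exactly two colours; by (v)
  one colour class is a permutation graph and the other one is its complement. Finally,
  labelings of the quotient and of the parts combine lexicographically into a labeling of the
  module, and induction over the strong modules yields (i).
*)

theory Submission
  imports Defs "HOL-Library.Product_Lexorder"
begin

section \<open>Permutation graphs via vertex orders\<close>

text \<open>perm_graph_of W E l pi amounts to the condition below for p = inv pi \<circ> l
  (perm_graph_of_iff_realizer).\<close>

definition perm_graph_wrt :: "'a set \<Rightarrow> ('a \<Rightarrow> 'a \<Rightarrow> bool) \<Rightarrow> ('a \<Rightarrow> 'b::linorder) \<Rightarrow> bool" where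
  "perm_graph_wrt W E l \<longleftrightarrow>
     (\<exists>p::'a \<Rightarrow> 'b. inj_on p W \<and> (\<forall>u\<in>W. \<forall>v\<in>W. l v < l u \<longrightarrow> (E u v \<longleftrightarrow> p u < p v)))"

definition ce_perm_labeling :: "'a set \<Rightarrow> ('a \<Rightarrow> 'a \<Rightarrow> 'c) \<Rightarrow> ('a \<Rightarrow> 'b::linorder) \<Rightarrow> bool" where
  "ce_perm_labeling W c l \<longleftrightarrow> inj_on l W \<and> (\<forall>i\<in>colors W c. perm_graph_wrt W (mono_edges c i) l)"

lemma ex_rank_bij:
  fixes f :: "'a \<Rightarrow> 'b::linorder"
  assumes "finite W" "inj_on f W"
  obtains g :: "'a \<Rightarrow> nat"
  where "bij_betw g W {1..card W}" "\<forall>u\<in>W. \<forall>v\<in>W. g u < g v \<longleftrightarrow> f u < f v"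
proof
  define g where "g u = card {w\<in>W. f w \<le> f u}" for u
  have g_less: "g u < g v" if "u \<in> W" "v \<in> W" "f u < f v" for u v
  proof -
    have "{w\<in>W. f w \<le> f u} \<subseteq> {w\<in>W. f w \<le> f v}"
      using that(3) by auto
    moreover have "v \<in> {w\<in>W. f w \<le> f v} - {w\<in>W. f w \<le> f u}"
      using that by auto
    ultimately have "{w\<in>W. f w \<le> f u} \<subset> {w\<in>W. f w \<le> f v}"
      by blast
    then show ?thesis
      unfolding g_def using assms(1) by (simp add: psubset_card_mono)
  qed
  show g_iff: "\<forall>u\<in>W. \<forall>v\<in>W. g u < g v \<longleftrightarrow> f u < f v"
  proof (intro ballI iffI)
    fix u v assume "u \<in> W" "v \<in> W" "g u < g v"
    then show "f u < f v"
      using g_less[of v u] inj_onD[OF assms(2), of u v]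
      by (cases "f u" "f v" rule: linorder_cases) auto
  qed (rule g_less)
  have "inj_on g W"
  proof (rule inj_onI)
    fix u v assume "u \<in> W" "v \<in> W" "g u = g v"
    then show "u = v"
      using g_less[of u v] g_less[of v u] inj_onD[OF assms(2), of u v]
      by (cases "f u" "f v" rule: linorder_cases) auto
  qed
  moreover have "g ` W \<subseteq> {1..card W}"
    unfolding g_def using assms(1) by (auto intro!: card_mono Suc_leI card_gt_0_iff[THEN iffD2])
  ultimately show "bij_betw g W {1..card W}"
    by (simp add: bij_betw_def card_image card_subset_eq)
qed

lemma perm_graph_of_iff_realizer:
  assumes l: "bij_betw l W {1..card W}"
  shows "(\<exists>pi. perm_graph_of W E l pi) \<longleftrightarrow>
    (\<exists>q. bij_betw q W {1..card W} \<and> (\<forall>u\<in>W. \<forall>v\<in>W. l v < l u \<longrightarrow> (E u v \<longleftrightarrow> q u < q v)))"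
proof
  assume "\<exists>pi. perm_graph_of W E l pi"
  then obtain pi where pi: "perm_graph_of W E l pi" ..
  then have "bij_betw pi {1..card W} {1..card W}"
    unfolding perm_graph_of_def by blast
  then have "bij_betw (inv_into {1..card W} pi \<circ> l) W {1..card W}"
    using l bij_betw_inv_into bij_betw_trans by blast
  with pi show "\<exists>q. bij_betw q W {1..card W} \<and> (\<forall>u\<in>W. \<forall>v\<in>W. l v < l u \<longrightarrow> (E u v \<longleftrightarrow> q u < q v))"
    unfolding perm_graph_of_def by (intro exI[of _ "inv_into {1..card W} pi \<circ> l"]) auto
next
  assume "\<exists>q. bij_betw q W {1..card W} \<and> (\<forall>u\<in>W. \<forall>v\<in>W. l v < l u \<longrightarrow> (E u v \<longleftrightarrow> q u < q v))"
  then obtain q where q: "bij_betw q W {1..card W}"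
    and E: "\<forall>u\<in>W. \<forall>v\<in>W. l v < l u \<longrightarrow> (E u v \<longleftrightarrow> q u < q v)" by blast
  define pi where "pi = l \<circ> inv_into W q"
  have pi: "bij_betw pi {1..card W} {1..card W}"
    unfolding pi_def using q l bij_betw_inv_into bij_betw_trans by blast
  have "inv_into {1..card W} pi (l u) = q u" if "u \<in> W" for u
  proof -
    have "pi (q u) = l u"
      unfolding pi_def using q that by (simp add: bij_betw_imp_inj_on)
    moreover have "q u \<in> {1..card W}"
      using q that bij_betwE by blast
    ultimately show ?thesis
      using pi by (metis bij_betw_imp_inj_on inv_into_f_f)
  qed
  then have "perm_graph_of W E l pi"
    unfolding perm_graph_of_def using l pi E by auto
  then show "\<exists>pi. perm_graph_of W E l pi" by blast
qed

lemma perm_graph_of_imp_wrt: "perm_graph_of W E l pi \<Longrightarrow> perm_graph_wrt W E l"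
  using perm_graph_of_iff_realizer[of l W E] bij_betw_imp_inj_on
  unfolding perm_graph_of_def perm_graph_wrt_def by blast

lemma perm_graph_of_if_wrt:
  fixes l :: "'a \<Rightarrow> 'b::linorder"
  assumes "finite W" "perm_graph_wrt W E l" "bij_betw g W {1..card W}"
    and "\<forall>u\<in>W. \<forall>v\<in>W. g u < g v \<longleftrightarrow> l u < l v"
  shows "\<exists>pi. perm_graph_of W E g pi"
proof -
  obtain p :: "'a \<Rightarrow> 'b" where p: "inj_on p W"
    and E: "\<forall>u\<in>W. \<forall>v\<in>W. l v < l u \<longrightarrow> (E u v \<longleftrightarrow> p u < p v)"
    using assms(2) unfolding perm_graph_wrt_def by blast
  obtain q where "bij_betw q W {1..card W}" "\<forall>u\<in>W. \<forall>v\<in>W. q u < q v \<longleftrightarrow> p u < p v"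
    using ex_rank_bij[OF assms(1) p] by blast
  with E assms(4) show ?thesis
    using perm_graph_of_iff_realizer[OF assms(3)] by auto
qed

lemma ce_perm_graph_if_labeling:
  assumes "finite W" "ce_perm_labeling W c l"
  shows "ce_perm_graph W c"
proof -
  obtain g where "bij_betw g W {1..card W}" "\<forall>u\<in>W. \<forall>v\<in>W. g u < g v \<longleftrightarrow> l u < l v"
    using ex_rank_bij[OF assms(1)] assms(2) unfolding ce_perm_labeling_def by blast
  with assms show ?thesis
    unfolding ce_perm_graph_def ce_perm_labeling_def using perm_graph_of_if_wrt by metis
qed

lemma ce_perm_graph_imp_labeling:
  assumes "finite W" "ce_perm_graph W c"
  obtains l :: "'a \<Rightarrow> nat" where "ce_perm_labeling W c l"
proof (cases "colors W c = {}")
  case True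
  obtain l :: "'a \<Rightarrow> nat" where "inj_on l W"
    using finite_imp_inj_to_nat_seg[OF assms(1)] by blast
  with True that show ?thesis
    unfolding ce_perm_labeling_def by blast
next
  case False
  obtain l where l: "\<forall>i\<in>colors W c. \<exists>pi. perm_graph_of W (mono_edges c i) l pi"
    using assms(2) unfolding ce_perm_graph_def by blast
  with False have "inj_on l W"
    unfolding perm_graph_of_def using bij_betw_imp_inj_on by blast
  with l that show ?thesis
    unfolding ce_perm_labeling_def using perm_graph_of_imp_wrt by blast
qed

lemma perm_graph_wrt_transfer:
  fixes l :: "'b \<Rightarrow> 'c::linorder"
  assumes "inj_on f W" "f ` W \<subseteq> V" "\<forall>a\<in>W. \<forall>b\<in>W. E' a b \<longleftrightarrow> E (f a) (f b)"
    and "perm_graph_wrt V E l"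
  shows "perm_graph_wrt W E' (l \<circ> f)"
proof -
  obtain p :: "'b \<Rightarrow> 'c" where p: "inj_on p V" "\<forall>u\<in>V. \<forall>v\<in>V. l v < l u \<longrightarrow> (E u v \<longleftrightarrow> p u < p v)"
    using assms(4) unfolding perm_graph_wrt_def by blast
  have "inj_on (p \<circ> f) W"
    using comp_inj_on[OF assms(1) inj_on_subset[OF p(1) assms(2)]] .
  moreover have "E' u v \<longleftrightarrow> p (f u) < p (f v)" if "u \<in> W" "v \<in> W" "l (f v) < l (f u)" for u v
  proof -
    have "f u \<in> V" "f v \<in> V"
      using assms(2) that by auto
    then show ?thesis
      using p(2) assms(3) that by simp
  qed
  ultimately show ?thesis
    unfolding perm_graph_wrt_def by (intro exI[of _ "p \<circ> f"]) simp
qed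

lemma perm_graph_wrt_comp_mono:
  fixes l :: "'a \<Rightarrow> 'b::linorder" and h :: "'b \<Rightarrow> 'c::linorder"
  assumes "strict_mono h" "perm_graph_wrt W E l"
  shows "perm_graph_wrt W E (h \<circ> l)"
proof -
  obtain p :: "'a \<Rightarrow> 'b" where p: "inj_on p W" "\<forall>u\<in>W. \<forall>v\<in>W. l v < l u \<longrightarrow> (E u v \<longleftrightarrow> p u < p v)"
    using assms(2) unfolding perm_graph_wrt_def by blast
  have "inj_on (h \<circ> p) W"
    using p(1) strict_mono_imp_inj_on[OF assms(1)] by (simp add: comp_inj_on inj_on_subset)
  with p(2) show ?thesis
    unfolding perm_graph_wrt_def using strict_mono_less[OF assms(1)]
    by (intro exI[of _ "h \<circ> p"]) simp
qed

lemma perm_graph_wrt_no_edges: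
  assumes "inj_on l W" "\<forall>u\<in>W. \<forall>v\<in>W. \<not> E u v"
  shows "perm_graph_wrt W E l"
  unfolding perm_graph_wrt_def using assms by (intro exI[of _ l]) auto

lemma perm_graph_wrt_complement:
  fixes l :: "'a \<Rightarrow> 'b::linordered_ab_group_add"
  assumes "perm_graph_wrt W E l" "\<forall>u\<in>W. \<forall>v\<in>W. u \<noteq> v \<longrightarrow> (E' u v \<longleftrightarrow> \<not> E u v)"
  shows "perm_graph_wrt W E' l"
proof -
  obtain p :: "'a \<Rightarrow> 'b" where p: "inj_on p W" "\<forall>u\<in>W. \<forall>v\<in>W. l v < l u \<longrightarrow> (E u v \<longleftrightarrow> p u < p v)"
    using assms(1) unfolding perm_graph_wrt_def by blast
  have "inj_on (\<lambda>u. - p u) W"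
    using p(1) by (simp add: inj_on_def)
  moreover have "E' u v \<longleftrightarrow> - p u < - p v" if "u \<in> W" "v \<in> W" "l v < l u" for u v
  proof -
    have "u \<noteq> v"
      using that(3) by blast
    have "E u v \<longleftrightarrow> p u < p v"
      using p(2) that by blast
    moreover have "E' u v \<longleftrightarrow> \<not> E u v"
      using assms(2) that \<open>u \<noteq> v\<close> by blast
    moreover have "p u \<noteq> p v"
      using inj_onD[OF p(1) _ that(1,2)] \<open>u \<noteq> v\<close> by blast
    ultimately show ?thesis
      by auto
  qed
  ultimately show ?thesis
    unfolding perm_graph_wrt_def by blast
qed

lemma ce_perm_labeling_mono_edges:
  assumes "ce_perm_labeling W c l"
  shows "perm_graph_wrt W (mono_edges c i) l"
proof (cases "i \<in> colors W c")
  case False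
  then have "\<forall>u\<in>W. \<forall>v\<in>W. \<not> mono_edges c i u v"
    unfolding colors_def mono_edges_def by blast
  moreover have "inj_on l W"
    using assms unfolding ce_perm_labeling_def by simp
  ultimately show ?thesis
    by (simp add: perm_graph_wrt_no_edges)
qed (use assms in \<open>simp add: ce_perm_labeling_def\<close>)

lemma ce_perm_labeling_realizers:
  fixes l :: "'a \<Rightarrow> 'b::linorder"
  assumes "ce_perm_labeling W c l"
  shows "\<exists>q :: 'c \<Rightarrow> 'a \<Rightarrow> 'b. \<forall>i. inj_on (q i) W \<and>
    (\<forall>u\<in>W. \<forall>v\<in>W. l v < l u \<longrightarrow> (mono_edges c i u v \<longleftrightarrow> q i u < q i v))"
proof -
  have "\<forall>i. \<exists>p :: 'a \<Rightarrow> 'b. inj_on p W \<and>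
      (\<forall>u\<in>W. \<forall>v\<in>W. l v < l u \<longrightarrow> (mono_edges c i u v \<longleftrightarrow> p u < p v))"
    using ce_perm_labeling_mono_edges[OF assms] unfolding perm_graph_wrt_def by blast
  then show ?thesis
    by (rule choice)
qed

lemma ce_perm_labeling_transfer:
  assumes "inj_on f W" "f ` W \<subseteq> V" "\<forall>a\<in>W. \<forall>b\<in>W. a \<noteq> b \<longrightarrow> c' a b = c (f a) (f b)"
    and "ce_perm_labeling V c l"
  shows "ce_perm_labeling W c' (l \<circ> f)"
proof -
  have "\<forall>a\<in>W. \<forall>b\<in>W. mono_edges c' i a b \<longleftrightarrow> mono_edges c i (f a) (f b)" for i
    using assms(3) inj_on_eq_iff[OF assms(1)] unfolding mono_edges_def by auto
  then have "perm_graph_wrt W (mono_edges c' i) (l \<circ> f)" for i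
    using perm_graph_wrt_transfer[OF assms(1,2) _ ce_perm_labeling_mono_edges[OF assms(4)]] by blast
  moreover have "inj_on l V"
    using assms(4) unfolding ce_perm_labeling_def by simp
  then have "inj_on (l \<circ> f) W"
    using comp_inj_on[OF assms(1) inj_on_subset[OF _ assms(2)]] by blast
  ultimately show ?thesis
    unfolding ce_perm_labeling_def by blast
qed

lemma ce_perm_graph_induced:
  assumes "finite V" "ce_perm_graph V c" "W \<subseteq> V"
  shows "ce_perm_graph W c"
proof -
  obtain l :: "'a \<Rightarrow> nat" where "ce_perm_labeling V c l"
    using ce_perm_graph_imp_labeling[OF assms(1,2)] by blast
  then have "ce_perm_labeling W c (l \<circ> id)"
    using assms(3) by (intro ce_perm_labeling_transfer) auto
  then show ?thesis
    using ce_perm_graph_if_labeling finite_subset[OF assms(3,1)] by blast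
qed

lemma ce_perm_graph_monochromatic:
  assumes "finite W" "\<forall>u\<in>W. \<forall>v\<in>W. u \<noteq> v \<longrightarrow> c u v = col"
  shows "ce_perm_graph W c"
proof -
  obtain l :: "'a \<Rightarrow> nat" where l: "inj_on l W"
    using finite_imp_inj_to_nat_seg[OF assms(1)] by blast
  then have int_l: "inj_on (int \<circ> l) W"
    by (simp add: inj_on_def)
  have "perm_graph_wrt W (\<lambda>_ _. False) (int \<circ> l)"
    using perm_graph_wrt_no_edges[OF int_l] by simp
  moreover have "\<forall>u\<in>W. \<forall>v\<in>W. u \<noteq> v \<longrightarrow> (mono_edges c col u v \<longleftrightarrow> \<not> False)"
    using assms(2) by (simp add: mono_edges_def)
  ultimately have "perm_graph_wrt W (mono_edges c col) (int \<circ> l)"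
    by (rule perm_graph_wrt_complement)
  moreover have "colors W c \<subseteq> {col}"
    using assms(2) unfolding colors_def by blast
  ultimately show ?thesis
    using ce_perm_graph_if_labeling[OF assms(1)] int_l unfolding ce_perm_labeling_def by blast
qed

lemma ce_perm_graph_at_most_two:
  assumes "finite Q" "card Q \<le> 2" "\<forall>A\<in>Q. \<forall>B\<in>Q. c A B = c B A"
  shows "ce_perm_graph Q c"
proof (cases "\<exists>A\<in>Q. \<exists>B\<in>Q. A \<noteq> B")
  case True
  then obtain A0 B0 where AB: "A0 \<in> Q" "B0 \<in> Q" "A0 \<noteq> B0"
    by blast
  have "Q = {A0, B0}"
  proof (rule ccontr)
    assume "Q \<noteq> {A0, B0}"
    then obtain C where "C \<in> Q" "C \<notin> {A0, B0}"
      using AB by blast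
    then have "card {A0, B0, C} \<le> card Q"
      using AB by (intro card_mono[OF assms(1)]) auto
    moreover have "card {A0, B0, C} = 3"
      using AB(3) \<open>C \<notin> {A0, B0}\<close> by auto
    ultimately show False
      using assms(2) by simp
  qed
  moreover have "c B0 A0 = c A0 B0"
    using assms(3) AB(1,2) by simp
  ultimately have "\<forall>A\<in>Q. \<forall>B\<in>Q. A \<noteq> B \<longrightarrow> c A B = c A0 B0"
    by auto
  then show ?thesis
    by (rule ce_perm_graph_monochromatic[OF assms(1)])
next
  case False
  then have "\<forall>A\<in>Q. \<forall>B\<in>Q. A \<noteq> B \<longrightarrow> c A B = undefined"
    by blast
  then show ?thesis
    by (rule ce_perm_graph_monochromatic[OF assms(1)])
qed

lemma ce_perm_graph_two_colors:
  fixes l :: "'a \<Rightarrow> 'b::linordered_ab_group_add"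
  assumes "finite W" "colors W c = {a, b}" "a \<noteq> b"
    and "inj_on l W" "perm_graph_wrt W (mono_edges c a) l"
  shows "ce_perm_graph W c"
proof -
  have "\<forall>u\<in>W. \<forall>v\<in>W. u \<noteq> v \<longrightarrow> (mono_edges c b u v \<longleftrightarrow> \<not> mono_edges c a u v)"
    using assms(2,3) unfolding mono_edges_def colors_def by blast
  then have "perm_graph_wrt W (mono_edges c b) l"
    by (rule perm_graph_wrt_complement[OF assms(5)])
  with assms(2,4,5) have "ce_perm_labeling W c l"
    unfolding ce_perm_labeling_def by simp
  then show ?thesis
    by (rule ce_perm_graph_if_labeling[OF assms(1)])
qed

definition rainbow_free :: "'a set \<Rightarrow> ('a \<Rightarrow> 'a \<Rightarrow> 'c) \<Rightarrow> bool" where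
  "rainbow_free H c \<longleftrightarrow> \<not> (\<exists>x y z. rainbow_triangle H c x y z)"

lemma perm_graph_wrt_middle_color:
  fixes l :: "'a \<Rightarrow> 'b::linorder"
  assumes "perm_graph_wrt V (mono_edges c (c x z)) l" "\<forall>u\<in>V. \<forall>v\<in>V. c u v = c v u"
    and "x \<in> V" "y \<in> V" "z \<in> V" "l x < l y" "l y < l z"
  shows "c x z = c x y \<or> c x z = c y z"
proof (rule ccontr)
  assume colors: "\<not> ?thesis"
  obtain p :: "'a \<Rightarrow> 'b" where p: "\<forall>u\<in>V. \<forall>v\<in>V. l v < l u \<longrightarrow> (mono_edges c (c x z) u v \<longleftrightarrow> p u < p v)"
    using assms(1) unfolding perm_graph_wrt_def by blast
  have "c z x = c x z" "c y x = c x y" "c z y = c y z"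
    using assms(2-5) by simp_all
  then have "mono_edges c (c x z) z x" "\<not> mono_edges c (c x z) y x" "\<not> mono_edges c (c x z) z y"
    using assms(6,7) colors unfolding mono_edges_def by auto
  moreover have "l x < l z"
    using assms(6,7) by simp
  ultimately have "p z < p x" "\<not> p y < p x" "\<not> p z < p y"
    using p assms(3-7) by blast+
  then show False
    by simp
qed

lemma ce_perm_labeling_rainbow_free:
  assumes sym: "\<forall>u\<in>V. \<forall>v\<in>V. c u v = c v u" and l: "ce_perm_labeling V c l"
  shows "rainbow_free V c"
  unfolding rainbow_free_def
proof (intro notI, elim exE)
  fix x y z assume rainbow: "rainbow_triangle V c x y z"
  have sorted: False if "rainbow_triangle V c a b d" "l a < l b" "l b < l d" for a b d
    using perm_graph_wrt_middle_color[OF ce_perm_labeling_mono_edges[OF l] sym, of a b d] that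
    unfolding rainbow_triangle_def by auto
  have swap12: "rainbow_triangle V c b a d" and swap23: "rainbow_triangle V c a d b"
    if "rainbow_triangle V c a b d" for a b d
  proof -
    have "c b a = c a b" "c d b = c b d"
      using that sym unfolding rainbow_triangle_def by simp_all
    then show "rainbow_triangle V c b a d" "rainbow_triangle V c a d b"
      using that unfolding rainbow_triangle_def by auto
  qed
  have "l x \<noteq> l y" "l y \<noteq> l z" "l x \<noteq> l z"
    using l rainbow unfolding ce_perm_labeling_def rainbow_triangle_def inj_on_def by metis+
  then consider "l x < l y" "l y < l z" | "l x < l z" "l z < l y" | "l y < l x" "l x < l z"
    | "l y < l z" "l z < l x" | "l z < l x" "l x < l y" | "l z < l y" "l y < l x"
    by (meson linorder_neqE)
  then show False
  proof cases
    case 1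
    then show False by (rule sorted[OF rainbow])
  next
    case 2
    then show False by (rule sorted[OF swap23[OF rainbow]])
  next
    case 3
    then show False by (rule sorted[OF swap12[OF rainbow]])
  next
    case 4
    then show False by (rule sorted[OF swap23[OF swap12[OF rainbow]]])
  next
    case 5
    then show False by (rule sorted[OF swap12[OF swap23[OF rainbow]]])
  next
    case 6
    then show False by (rule sorted[OF swap12[OF swap23[OF swap12[OF rainbow]]]])
  qed
qed

lemma ce_perm_graph_rainbow_free:
  assumes "ecg V c" "ce_perm_graph V c"
  shows "rainbow_free V c"
proof -
  have "finite V" "\<forall>x\<in>V. \<forall>y\<in>V. c x y = c y x"
    using assms(1) unfolding ecg_def by simp_all
  then show ?thesis
    using ce_perm_graph_imp_labeling assms(2) ce_perm_labeling_rainbow_free by metis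
qed

section \<open>Strong modules and their quotients\<close>

lemma ecg_sym: "ecg V c \<Longrightarrow> x \<in> V \<Longrightarrow> y \<in> V \<Longrightarrow> c x y = c y x"
  unfolding ecg_def by blast

definition rep :: "'a set \<Rightarrow> 'a" where
  "rep A = (SOME u. u \<in> A)"

lemma rep_in: "A \<noteq> {} \<Longrightarrow> rep A \<in> A"
  unfolding rep_def by (simp add: some_in_eq)

lemma quot_color_rep: "quot_color c A B = c (rep A) (rep B)"
  unfolding quot_color_def rep_def ..

lemma strong_module_singleton: "x \<in> V \<Longrightarrow> strong_module V c {x}"
  unfolding strong_module_def is_module_def by auto

lemma strong_module_whole: "V \<noteq> {} \<Longrightarrow> strong_module V c V"
  unfolding strong_module_def is_module_def by auto

lemma strong_module_subset: "strong_module V c M \<Longrightarrow> M \<subseteq> V"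
  unfolding strong_module_def is_module_def by blast

lemma strong_module_nonempty: "strong_module V c M \<Longrightarrow> M \<noteq> {}"
  unfolding strong_module_def by blast

lemma strong_module_is_module: "strong_module V c M \<Longrightarrow> is_module V c M"
  unfolding strong_module_def by blast

lemma strong_module_overlap:
  "strong_module V c M \<Longrightarrow> is_module V c N \<Longrightarrow> M \<subseteq> N \<or> N \<subseteq> M \<or> M \<inter> N = {}"
  unfolding strong_module_def by blast

lemma is_module_subset: "is_module V c M \<Longrightarrow> M \<subseteq> V"
  unfolding is_module_def by blast

lemma is_module_color:
  "is_module V c M \<Longrightarrow> v \<in> V \<Longrightarrow> v \<notin> M \<Longrightarrow> u \<in> M \<Longrightarrow> u' \<in> M \<Longrightarrow> c u v = c u' v"
  unfolding is_module_def by blast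

lemma Pmax_strong: "A \<in> Pmax V c M \<Longrightarrow> strong_module V c A"
  unfolding Pmax_def by blast

lemma Pmax_psubset: "A \<in> Pmax V c M \<Longrightarrow> A \<subset> M"
  unfolding Pmax_def by blast

lemma Pmax_maximal:
  "A \<in> Pmax V c M \<Longrightarrow> strong_module V c N \<Longrightarrow> N \<subset> M \<Longrightarrow> A \<subseteq> N \<Longrightarrow> N = A"
  unfolding Pmax_def by blast

lemma Pmax_disjoint:
  assumes A: "A \<in> Pmax V c M" and B: "B \<in> Pmax V c M" and "A \<noteq> B"
  shows "A \<inter> B = {}"
proof -
  have "is_module V c B"
    using Pmax_strong[OF B] by (rule strong_module_is_module)
  then consider "A \<subseteq> B" | "B \<subseteq> A" | "A \<inter> B = {}"
    using strong_module_overlap[OF Pmax_strong[OF A]] by blast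
  then show ?thesis
  proof cases
    case 1
    then show ?thesis
      using Pmax_maximal[OF A Pmax_strong[OF B] Pmax_psubset[OF B] 1] \<open>A \<noteq> B\<close> by blast
  next
    case 2
    then show ?thesis
      using Pmax_maximal[OF B Pmax_strong[OF A] Pmax_psubset[OF A] 2] \<open>A \<noteq> B\<close> by blast
  qed simp
qed

lemma Union_Pmax:
  assumes "finite V" "strong_module V c M" "card M \<noteq> 1"
  shows "\<Union>(Pmax V c M) = M"
proof
  show "\<Union>(Pmax V c M) \<subseteq> M"
    by (auto dest: Pmax_psubset)
  show "M \<subseteq> \<Union>(Pmax V c M)"
  proof
    fix x assume "x \<in> M"
    define S where "S = {N. strong_module V c N \<and> N \<subset> M}"
    have "finite M"
      using finite_subset[OF strong_module_subset[OF assms(2)] assms(1)] .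
    moreover have "S \<subseteq> Pow M"
      unfolding S_def by auto
    ultimately have "finite S"
      by (simp add: finite_subset)
    moreover have "{x} \<in> S"
    proof -
      have "{x} \<noteq> M"
        using assms(3) by auto
      moreover have "x \<in> V"
        using \<open>x \<in> M\<close> strong_module_subset[OF assms(2)] by blast
      ultimately show ?thesis
        unfolding S_def using \<open>x \<in> M\<close> strong_module_singleton[of x V c] by auto
    qed
    ultimately obtain N where N: "N \<in> S" "{x} \<subseteq> N" and max: "\<forall>N'\<in>S. N \<subseteq> N' \<longrightarrow> N = N'"
      by (meson finite_has_maximal2)
    have "N \<in> Pmax V c M"
      unfolding Pmax_def
    proof (intro CollectI conjI allI impI)
      show "strong_module V c N" "N \<subset> M"
        using N(1) unfolding S_def by simp_all
      fix N' assume "strong_module V c N' \<and> N' \<subset> M \<and> N \<subseteq> N'"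
      then have "N' \<in> S" "N \<subseteq> N'"
        unfolding S_def by simp_all
      then show "N' = N"
        using max by (simp add: eq_commute)
    qed
    with \<open>{x} \<subseteq> N\<close> show "x \<in> \<Union>(Pmax V c M)"
      by blast
  qed
qed

lemma is_module_cross_color:
  assumes "ecg V c" "is_module V c A" "is_module V c B" "A \<inter> B = {}" "a \<in> A" "b \<in> B"
  shows "c a b = quot_color c A B"
proof -
  have "A \<noteq> {}" "B \<noteq> {}"
    using assms(5,6) by auto
  then have rA: "rep A \<in> A" and rB: "rep B \<in> B"
    by (simp_all add: rep_in)
  have "A \<subseteq> V" "B \<subseteq> V"
    using assms(2,3) by (simp_all add: is_module_subset)
  then have V: "b \<in> V" "rep A \<in> V" "rep B \<in> V" and out: "b \<notin> A" "rep A \<notin> B"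
    using rA rB assms(4-6) by auto
  have "c a b = c (rep A) b"
    using is_module_color[OF assms(2) V(1) out(1) assms(5) rA] .
  also have "\<dots> = c b (rep A)"
    using ecg_sym[OF assms(1) V(2,1)] .
  also have "\<dots> = c (rep B) (rep A)"
    using is_module_color[OF assms(3) V(2) out(2) assms(6) rB] .
  also have "\<dots> = c (rep A) (rep B)"
    using ecg_sym[OF assms(1) V(3,2)] .
  finally show ?thesis
    unfolding quot_color_rep .
qed

lemma Pmax_cross_color:
  assumes "ecg V c" "A \<in> Pmax V c M" "B \<in> Pmax V c M" "A \<noteq> B" "a \<in> A" "b \<in> B"
  shows "c a b = quot_color c A B"
  using is_module_cross_color[OF assms(1)
      strong_module_is_module[OF Pmax_strong[OF assms(2)]]
      strong_module_is_module[OF Pmax_strong[OF assms(3)]]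
      Pmax_disjoint[OF assms(2-4)] assms(5,6)] .

lemma quot_vertices_Pmax: "card M \<noteq> 1 \<Longrightarrow> quot_vertices V c M = Pmax V c M"
  unfolding quot_vertices_def by simp

lemma quot_vertices_strong:
  assumes "strong_module V c M" "A \<in> quot_vertices V c M"
  shows "strong_module V c A"
proof (cases "card M = 1")
  case True
  then show ?thesis
    using assms unfolding quot_vertices_def by simp
next
  case False
  then show ?thesis
    using assms(2) Pmax_strong by (simp add: quot_vertices_Pmax)
qed

lemma quot_vertices_disjoint:
  assumes "A \<in> quot_vertices V c M" "B \<in> quot_vertices V c M" "A \<noteq> B"
  shows "A \<inter> B = {}"
proof (cases "card M = 1")
  case True
  then show ?thesis
    using assms unfolding quot_vertices_def by simp
next
  case False
  then show ?thesis
    using assms Pmax_disjoint by (simp add: quot_vertices_Pmax)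
qed

lemma finite_quot_vertices:
  assumes "finite V" "strong_module V c M"
  shows "finite (quot_vertices V c M)"
proof -
  have "quot_vertices V c M \<subseteq> Pow V"
    using quot_vertices_strong[OF assms(2)] strong_module_subset by blast
  then show ?thesis
    using assms(1) by (simp add: finite_subset)
qed

lemma rep_quot_vertices:
  assumes "strong_module V c M"
  shows "inj_on rep (quot_vertices V c M)" "rep ` quot_vertices V c M \<subseteq> V"
proof -
  have ne: "A \<noteq> {}" and sub: "A \<subseteq> V" if "A \<in> quot_vertices V c M" for A
    using quot_vertices_strong[OF assms that]
    by (simp_all add: strong_module_nonempty strong_module_subset)
  show "inj_on rep (quot_vertices V c M)"
  proof (rule inj_onI, rule ccontr)
    fix A B assume A: "A \<in> quot_vertices V c M" and B: "B \<in> quot_vertices V c M"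
      and "rep A = rep B" "A \<noteq> B"
    then have "rep A \<in> A \<inter> B"
      using rep_in[OF ne[OF A]] rep_in[OF ne[OF B]] by simp
    then show False
      using quot_vertices_disjoint[OF A B \<open>A \<noteq> B\<close>] by simp
  qed
  show "rep ` quot_vertices V c M \<subseteq> V"
  proof (rule image_subsetI)
    fix A assume "A \<in> quot_vertices V c M"
    then show "rep A \<in> V"
      using rep_in[OF ne] sub by blast
  qed
qed

lemma ce_perm_labeling_quotient:
  assumes "strong_module V c M" "ce_perm_labeling V c l"
  shows "ce_perm_labeling (quot_vertices V c M) (quot_color c) (l \<circ> rep)"
  by (rule ce_perm_labeling_transfer[OF rep_quot_vertices[OF assms(1)] _ assms(2)])
    (simp add: quot_color_rep)

lemma ce_perm_graph_quotient:
  assumes "ecg V c" "strong_module V c M" "ce_perm_graph V c"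
  shows "ce_perm_graph (quot_vertices V c M) (quot_color c)"
proof -
  have "finite V"
    using assms(1) unfolding ecg_def by simp
  then obtain l :: "'a \<Rightarrow> nat" where "ce_perm_labeling V c l"
    using ce_perm_graph_imp_labeling assms(3) by blast
  then show ?thesis
    using ce_perm_graph_if_labeling[OF finite_quot_vertices[OF \<open>finite V\<close> assms(2)]]
      ce_perm_labeling_quotient[OF assms(2)] by blast
qed

lemma colors_quotient_subset:
  assumes "strong_module V c M"
  shows "colors (quot_vertices V c M) (quot_color c) \<subseteq> colors V c"
proof
  fix a assume "a \<in> colors (quot_vertices V c M) (quot_color c)"
  then obtain A B where "A \<in> quot_vertices V c M" "B \<in> quot_vertices V c M" "A \<noteq> B"
      "quot_color c A B = a"
    unfolding colors_def by blast
  moreover have "rep A \<noteq> rep B"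
    using calculation inj_on_eq_iff[OF rep_quot_vertices(1)[OF assms]] by blast
  ultimately show "a \<in> colors V c"
    unfolding colors_def quot_color_rep using rep_quot_vertices(2)[OF assms] by blast
qed

lemma quot_color_sym:
  assumes "ecg V c" "strong_module V c M"
  shows "\<forall>A\<in>quot_vertices V c M. \<forall>B\<in>quot_vertices V c M. quot_color c A B = quot_color c B A"
proof (intro ballI)
  fix A B assume "A \<in> quot_vertices V c M" "B \<in> quot_vertices V c M"
  then have "rep A \<in> V" "rep B \<in> V"
    using rep_quot_vertices(2)[OF assms(2)] by auto
  then show "quot_color c A B = quot_color c B A"
    unfolding quot_color_rep by (rule ecg_sym[OF assms(1)])
qed

lemma rainbow_free_quotient:
  assumes "strong_module V c M" "rainbow_free V c"
  shows "rainbow_free (quot_vertices V c M) (quot_color c)"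
  unfolding rainbow_free_def
proof (intro notI, elim exE)
  fix A B C assume "rainbow_triangle (quot_vertices V c M) (quot_color c) A B C"
  then have "rainbow_triangle V c (rep A) (rep B) (rep C)"
    using rep_quot_vertices[OF assms(1)] inj_on_eq_iff[OF rep_quot_vertices(1)[OF assms(1)]]
    unfolding rainbow_triangle_def quot_color_rep by (auto simp: image_subset_iff)
  with assms(2) show False
    unfolding rainbow_free_def by blast
qed

section \<open>Colour classes of rainbow-free colourings\<close>

definition color_edge :: "'a set \<Rightarrow> ('a \<Rightarrow> 'a \<Rightarrow> 'c) \<Rightarrow> 'c \<Rightarrow> 'a \<Rightarrow> 'a \<Rightarrow> bool" where
  "color_edge H c d x y \<longleftrightarrow> x \<in> H \<and> y \<in> H \<and> x \<noteq> y \<and> c x y = d"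

definition connected_color :: "'a set \<Rightarrow> ('a \<Rightarrow> 'a \<Rightarrow> 'c) \<Rightarrow> 'c \<Rightarrow> bool" where
  "connected_color H c d \<longleftrightarrow> (\<forall>x\<in>H. \<forall>y\<in>H. (color_edge H c d)\<^sup>*\<^sup>* x y)"

lemma rainbow_freeD:
  assumes "rainbow_free H c" "x \<in> H" "y \<in> H" "z \<in> H" "x \<noteq> y" "y \<noteq> z" "x \<noteq> z"
  shows "c x y = c y z \<or> c x y = c x z \<or> c y z = c x z"
  using assms unfolding rainbow_free_def rainbow_triangle_def by blast

lemma rainbow_free_subset: "rainbow_free H c \<Longrightarrow> F \<subseteq> H \<Longrightarrow> rainbow_free F c"
  unfolding rainbow_free_def rainbow_triangle_def by blast

lemma color_reach_sym:
  assumes "\<forall>x\<in>H. \<forall>y\<in>H. c x y = c y x" "(color_edge H c d)\<^sup>*\<^sup>* x y"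
  shows "(color_edge H c d)\<^sup>*\<^sup>* y x"
proof -
  have "symp (color_edge H c d)"
    using assms(1) unfolding symp_def color_edge_def by auto
  then show ?thesis
    using assms(2) symp_rtranclp by (metis sympD)
qed

lemma rtranclp_exit:
  assumes "r\<^sup>*\<^sup>* a b" "P a" "\<not> P b"
  shows "\<exists>x y. r\<^sup>*\<^sup>* a x \<and> r x y \<and> P x \<and> \<not> P y"
  using assms
proof (induction rule: rtranclp_induct)
  case (step y z)
  then show ?case
    by (cases "P y") blast+
qed simp

lemma connected_color_edge:
  assumes "connected_color H c d" "x \<in> H" "y \<in> H" "x \<noteq> y"
  shows "\<exists>w\<in>H. w \<noteq> x \<and> c x w = d"
proof -
  have "(color_edge H c d)\<^sup>*\<^sup>* x y"
    using assms unfolding connected_color_def by blast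
  then show ?thesis
  proof (cases rule: converse_rtranclpE)
    case base
    with assms(4) show ?thesis
      by simp
  next
    case (step w)
    then have "w \<in> H" "w \<noteq> x" "c x w = d"
      unfolding color_edge_def by auto
    then show ?thesis
      by blast
  qed
qed

lemma ex_not_in_if_card_less:
  assumes "finite T" "card T < card S"
  shows "\<exists>x\<in>S. x \<notin> T"
proof (rule ccontr)
  assume "\<not> ?thesis"
  then have "S \<subseteq> T"
    by blast
  then have "card S \<le> card T"
    by (rule card_mono[OF assms(1)])
  with assms(2) show False
    by simp
qed

lemma finite_colors: "finite H \<Longrightarrow> finite (colors H c)"
proof -
  assume "finite H"
  moreover have "colors H c \<subseteq> (\<lambda>(u, v). c u v) ` (H \<times> H)"
    unfolding colors_def by auto
  ultimately show ?thesis
    by (simp add: finite_subset)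
qed

lemma rainbow_free_component_color:
  assumes sym: "\<forall>x\<in>H. \<forall>y\<in>H. c x y = c y x" and rf: "rainbow_free H c"
    and path: "(color_edge H c d)\<^sup>*\<^sup>* y y'" and x: "x \<in> H"
    and not_reach: "\<not> (color_edge H c d)\<^sup>*\<^sup>* x y"
  shows "c x y = c x y'"
  using path
proof (induction rule: rtranclp_induct)
  case (step y1 y2)
  let ?R = "(color_edge H c d)\<^sup>*\<^sup>*"
  have e: "y1 \<in> H" "y2 \<in> H" "y1 \<noteq> y2" "c y1 y2 = d"
    using step.hyps(2) unfolding color_edge_def by auto
  have "?R y y2"
    using step.hyps by (rule rtranclp.rtrancl_into_rtrancl)
  then have "?R y1 y" "?R y2 y"
    using color_reach_sym[OF sym] step.hyps(1) by blast+
  then have not_reach': "\<not> ?R x y1" "\<not> ?R x y2"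
    using not_reach rtranclp_trans by fast+
  then have "x \<noteq> y1" "x \<noteq> y2"
    by auto
  moreover have "c x y1 \<noteq> d" "c x y2 \<noteq> d"
    using not_reach' x e(1,2) \<open>x \<noteq> y1\<close> \<open>x \<noteq> y2\<close>
    by (auto dest: r_into_rtranclp[where r = "color_edge H c d"] simp: color_edge_def)
  ultimately have "c x y1 = c x y2"
    using rainbow_freeD[OF rf x e(1,2)] e(3,4) by auto
  with step.IH show ?case
    by simp
qed simp

lemma connected_color_insert_reach:
  assumes "connected_color (insert v F) c d" "\<forall>x\<in>insert v F. \<forall>y\<in>insert v F. c x y = c y x"
    and "z \<in> F" "w \<in> F" "\<not> (color_edge F c d)\<^sup>*\<^sup>* z w"
  shows "\<exists>x\<in>F. (color_edge F c d)\<^sup>*\<^sup>* z x \<and> c v x = d"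
proof (rule ccontr)
  let ?R = "(color_edge F c d)\<^sup>*\<^sup>*"
  assume no_exit: "\<not> ?thesis"
  have "y \<in> F \<and> ?R z y" if "(color_edge (insert v F) c d)\<^sup>*\<^sup>* z y" for y
    using that
  proof (induction rule: rtranclp_induct)
    case base
    show ?case
      using assms(3) by simp
  next
    case (step y1 y2)
    have y2: "y2 \<in> insert v F" "y1 \<noteq> y2" "c y1 y2 = d"
      using step.hyps(2) unfolding color_edge_def by simp_all
    have y1: "y1 \<in> F" "?R z y1"
      using step.IH by auto
    have "y2 \<noteq> v"
    proof
      assume "y2 = v"
      then have "c v y1 = d"
        using y2(3) assms(2)[rule_format, of y1 v] y1(1) by simp
      with y1 no_exit show False
        by simp
    qed
    with y2 y1 have "color_edge F c d y1 y2"
      unfolding color_edge_def by simp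
    then have "?R z y2"
      by (rule rtranclp.rtrancl_into_rtrancl[OF y1(2)])
    with y2(1) \<open>y2 \<noteq> v\<close> show ?case
      by simp
  qed
  moreover have "(color_edge (insert v F) c d)\<^sup>*\<^sup>* z w"
    using assms(1,3,4) unfolding connected_color_def by simp
  ultimately show False
    using assms(5) by simp
qed

text \<open>The d-component of z in F reaches v through some x with c v x = d; the triangle v w x
  then forces c w x = e, and x and z look alike from w.\<close>

lemma insert_vertex_color_across_components:
  assumes "v \<notin> F" "\<forall>x\<in>insert v F. \<forall>y\<in>insert v F. c x y = c y x"
    and rf: "rainbow_free (insert v F) c" and "connected_color (insert v F) c d"
    and "e \<noteq> d" "w \<in> F" "c v w = e" "z \<in> F" "\<not> (color_edge F c d)\<^sup>*\<^sup>* w z"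
  shows "c w z = e"
proof -
  let ?R = "(color_edge F c d)\<^sup>*\<^sup>*"
  have symF: "\<forall>x\<in>F. \<forall>y\<in>F. c x y = c y x"
    using assms(2) by simp
  have rfF: "rainbow_free F c"
    by (rule rainbow_free_subset[OF rf]) auto
  have "\<not> ?R z w"
    using assms(9) color_reach_sym[OF symF, where x = z and y = w] by blast
  then obtain x where x: "x \<in> F" "?R z x" "c v x = d"
    using connected_color_insert_reach[OF assms(4,2,8,6)] by auto
  have "?R x z"
    using color_reach_sym[OF symF x(2)] .
  then have not_wx: "\<not> ?R w x"
    using assms(9) rtranclp_trans[of "color_edge F c d" w x z] by auto
  then have "w \<noteq> x"
    by auto
  have "c w x \<noteq> d"
  proof
    assume "c w x = d"
    then have "color_edge F c d w x"
      using assms(6) x(1) \<open>w \<noteq> x\<close> by (simp add: color_edge_def)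
    with not_wx show False
      by auto
  qed
  moreover have "v \<noteq> w" "v \<noteq> x"
    using assms(1,6) x(1) by auto
  ultimately have "c w x = e"
    using rainbow_freeD[OF rf, of v w x] \<open>w \<noteq> x\<close> assms(5-7) x(1,3) by auto
  moreover have "c w z = c w x"
    using rainbow_free_component_color[OF symF rfF \<open>?R x z\<close> assms(6) not_wx] by simp
  ultimately show ?thesis
    by simp
qed

lemma connected_color_new_color:
  assumes "v \<notin> F" "F \<noteq> {}" and sym: "\<forall>x\<in>insert v F. \<forall>y\<in>insert v F. c x y = c y x"
    and "d \<notin> colors F c" "a \<noteq> d"
    and d: "connected_color (insert v F) c d" and a: "connected_color (insert v F) c a"
  shows False
proof -
  have to_v: "c u v = d" if u: "u \<in> F" for u
  proof -
    obtain w where w: "w \<in> insert v F" "w \<noteq> u" "c u w = d"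
      using connected_color_edge[OF d, of u v] u assms(1) by auto
    have "w \<notin> F"
      using w(2,3) u assms(4) unfolding colors_def by blast
    with w show ?thesis
      by simp
  qed
  obtain u where "u \<in> F"
    using assms(2) by blast
  then obtain w where w: "w \<in> insert v F" "w \<noteq> v" "c v w = a"
    using connected_color_edge[OF a, of v u] assms(1) by auto
  then have "w \<in> F"
    by simp
  then have "c v w = c w v"
    using sym[rule_format, of v w] by simp
  then show False
    using to_v[OF \<open>w \<in> F\<close>] w(3) assms(5) by simp
qed

text \<open>Take neighbours w1, w2 of v in colours e1, e2. In different d-components of F the edge
  w1 w2 would get both colours; in the same one, a vertex z outside that component sees w1
  in colour e1, w2 in colour e2, and both in the same colour.\<close>

lemma connected_colors_insert_disconnected:
  assumes "v \<notin> F" and sym: "\<forall>x\<in>insert v F. \<forall>y\<in>insert v F. c x y = c y x"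
    and rf: "rainbow_free (insert v F) c"
    and "x0 \<in> F" "y0 \<in> F" "\<not> (color_edge F c d)\<^sup>*\<^sup>* x0 y0"
    and "e1 \<noteq> d" "e2 \<noteq> d" "e1 \<noteq> e2"
    and d: "connected_color (insert v F) c d"
    and e1: "connected_color (insert v F) c e1" and e2: "connected_color (insert v F) c e2"
  shows False
proof -
  let ?R = "(color_edge F c d)\<^sup>*\<^sup>*"
  have symF: "\<forall>x\<in>F. \<forall>y\<in>F. c x y = c y x"
    using sym by simp
  have color: "c w z = e" if "e \<noteq> d" "w \<in> F" "c v w = e" "z \<in> F" "\<not> ?R w z" for e w z
    using insert_vertex_color_across_components[OF assms(1) sym rf d that] .
  obtain w1 where w1: "w1 \<in> F" "c v w1 = e1"
    using connected_color_edge[OF e1, of v x0] assms(1,4) by auto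
  obtain w2 where w2: "w2 \<in> F" "c v w2 = e2"
    using connected_color_edge[OF e2, of v x0] assms(1,4) by auto
  show False
  proof (cases "?R w1 w2")
    case False
    then have "\<not> ?R w2 w1"
      using color_reach_sym[OF symF, of d w2 w1] by blast
    then have "c w1 w2 = e1" "c w2 w1 = e2"
      using color assms(7,8) w1 w2 False by blast+
    then show False
      using symF[rule_format, of w1 w2] w1(1) w2(1) assms(9) by simp
  next
    case True
    obtain z where z: "z \<in> F" "\<not> ?R w1 z"
    proof (cases "?R w1 x0")
      case True
      then have "\<not> ?R w1 y0"
        using assms(6) color_reach_sym[OF symF, of d w1 x0]
          rtranclp_trans[of "color_edge F c d" x0 w1 y0]
        by blast
      with that assms(5) show ?thesis
        by blast
    qed (use that assms(4) in blast)
    then have "\<not> ?R w2 z"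
      using True rtranclp_trans[of "color_edge F c d" w1 w2 z] by blast
    then have "c w1 z = e1" "c w2 z = e2"
      using color assms(7,8) w1 w2 z by blast+
    moreover have "\<not> ?R z w1"
      using z(2) color_reach_sym[OF symF, of d z w1] by blast
    then have "c z w1 = c z w2"
      using rainbow_free_component_color[OF symF rainbow_free_subset[OF rf] True z(1)] by blast
    ultimately show False
      using symF[rule_format, of z w1] symF[rule_format, of z w2] z(1) w1(1) w2(1) assms(9) by simp
  qed
qed

lemma rainbow_free_disconnected_color:
  assumes "finite H" "\<forall>x\<in>H. \<forall>y\<in>H. c x y = c y x" "rainbow_free H c" "3 \<le> card (colors H c)"
  shows "\<exists>d\<in>colors H c. \<not> connected_color H c d"
  using assms
proof (induction H rule: finite_induct)
  case empty
  then show ?case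
    by (simp add: colors_def)
next
  case (insert v F)
  let ?H = "insert v F"
  have symF: "\<forall>x\<in>F. \<forall>y\<in>F. c x y = c y x"
    using insert.prems(1) by simp
  have rfF: "rainbow_free F c"
    by (rule rainbow_free_subset[OF insert.prems(2)]) auto
  have fin: "finite (colors F c)"
    using insert.hyps(1) by (rule finite_colors)
  show ?case
  proof (rule ccontr)
    assume "\<not> ?case"
    then have conn: "connected_color ?H c d" if "d \<in> colors ?H c" for d
      using that by blast
    show False
    proof (cases "3 \<le> card (colors F c)")
      case True
      then obtain d where d: "d \<in> colors F c" "\<not> connected_color F c d"
        using insert.IH symF rfF by blast
      then obtain x0 y0 where xy: "x0 \<in> F" "y0 \<in> F" "\<not> (color_edge F c d)\<^sup>*\<^sup>* x0 y0"
        unfolding connected_color_def by blast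
      have "d \<in> colors ?H c"
        using d(1) unfolding colors_def by blast
      obtain e1 where e1: "e1 \<in> colors ?H c" "e1 \<notin> {d}"
        using ex_not_in_if_card_less[of "{d}" "colors ?H c"] insert.prems(3) by auto
      have "card {d, e1} \<le> 2"
        by (simp add: card_insert_if)
      then have "card {d, e1} < card (colors ?H c)"
        using insert.prems(3) by simp
      then obtain e2 where e2: "e2 \<in> colors ?H c" "e2 \<notin> {d, e1}"
        using ex_not_in_if_card_less[of "{d, e1}"] by auto
      show False
        using connected_colors_insert_disconnected[OF insert.hyps(2) insert.prems(1,2) xy]
          e1 e2 conn \<open>d \<in> colors ?H c\<close> by auto
    next
      case False
      have "card (colors F c) < card (colors ?H c)"
        using False insert.prems(3) by simp
      then obtain d where d: "d \<in> colors ?H c" "d \<notin> colors F c"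
        using ex_not_in_if_card_less[OF fin] by blast
      obtain a where a: "a \<in> colors ?H c" "a \<notin> {d}"
        using ex_not_in_if_card_less[of "{d}" "colors ?H c"] insert.prems(3) by auto
      have "F \<noteq> {}"
        using d(1) unfolding colors_def by auto
      then show False
        using connected_color_new_color[OF insert.hyps(2) _ insert.prems(1) d(2)] a conn d(1)
        by auto
    qed
  qed
qed

section \<open>Prime quotients of rainbow-free colourings\<close>

lemma Union_color_component_module:
  fixes c :: "'a \<Rightarrow> 'a \<Rightarrow> 'c" and d :: 'c
  assumes ecg: "ecg V c" and rf: "rainbow_free V c" and M: "strong_module V c M" "card M \<noteq> 1"
    and "A1 \<in> Pmax V c M"
  defines "X \<equiv> {B \<in> Pmax V c M. (color_edge (Pmax V c M) (quot_color c) d)\<^sup>*\<^sup>* A1 B}"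
  shows "is_module V c (\<Union>X)"
  unfolding is_module_def
proof (intro conjI ballI)
  let ?P = "Pmax V c M" and ?R = "(color_edge (Pmax V c M) (quot_color c) d)\<^sup>*\<^sup>*"
  have sym: "\<forall>A\<in>?P. \<forall>B\<in>?P. quot_color c A B = quot_color c B A"
    using quot_color_sym[OF ecg M(1)] by (simp add: quot_vertices_Pmax[OF M(2)])
  have rfP: "rainbow_free ?P (quot_color c)"
    using rainbow_free_quotient[OF M(1) rf] by (simp add: quot_vertices_Pmax[OF M(2)])
  have "\<Union>X \<subseteq> M"
    unfolding X_def using Pmax_psubset by blast
  then show "\<Union>X \<subseteq> V"
    using strong_module_subset[OF M(1)] by blast
  fix v u u' assume v: "v \<in> V - \<Union>X" and "u \<in> \<Union>X" "u' \<in> \<Union>X"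
  then obtain A A' where A: "A \<in> X" "u \<in> A" and A': "A' \<in> X" "u' \<in> A'"
    by blast
  show "c u v = c u' v"
  proof (cases "v \<in> M")
    case False
    then show ?thesis
      using is_module_color[OF strong_module_is_module[OF M(1)], of v u u'] v A A'
        \<open>\<Union>X \<subseteq> M\<close> by blast
  next
    case True
    then obtain B where B: "B \<in> ?P" "v \<in> B"
      using Union_Pmax[OF _ M] ecg unfolding ecg_def by blast
    have "B \<notin> X"
      using B(2) v by blast
    then have "A \<noteq> B" "A' \<noteq> B"
      using A(1) A'(1) by auto
    have AP: "A \<in> ?P" "A' \<in> ?P" "?R A1 A" "?R A1 A'"
      using A(1) A'(1) unfolding X_def by auto
    then have "?R A A'"
      using color_reach_sym[OF sym AP(3)] rtranclp_trans by fast
    moreover have "\<not> ?R B A"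
    proof
      assume "?R B A"
      then have "?R A1 B"
        using color_reach_sym[OF sym] AP(3) rtranclp_trans by fast
      with B(1) \<open>B \<notin> X\<close> show False
        unfolding X_def by blast
    qed
    ultimately have "quot_color c B A = quot_color c B A'"
      by (rule rainbow_free_component_color[OF sym rfP _ B(1)])
    then have "quot_color c A B = quot_color c A' B"
      using sym B(1) AP(1,2) by simp
    then show ?thesis
      using Pmax_cross_color[OF ecg AP(1) B(1) \<open>A \<noteq> B\<close> A(2) B(2)]
        Pmax_cross_color[OF ecg AP(2) B(1) \<open>A' \<noteq> B\<close> A'(2) B(2)] by simp
  qed
qed

lemma is_module_Pmax_color:
  assumes ecg: "ecg V c" and Y: "is_module V c Y"
    and D1: "D1 \<in> Pmax V c M" "D1 \<subseteq> Y" and D2: "D2 \<in> Pmax V c M" "D2 \<inter> Y = {}"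
    and B: "B \<in> Pmax V c M" "y \<in> B" "y \<in> Y" "B \<noteq> D2"
  shows "quot_color c B D2 = quot_color c D1 D2"
proof -
  have reps: "rep D1 \<in> D1" "rep D2 \<in> D2"
    using D1(1) D2(1) by (simp_all add: rep_in strong_module_nonempty[OF Pmax_strong])
  moreover have "rep D2 \<in> V"
    using reps(2) D2(1) Pmax_strong strong_module_subset by blast
  ultimately have "c (rep D1) (rep D2) = c y (rep D2)"
    using is_module_color[OF Y, of "rep D2" "rep D1" y] D1(2) B(3) D2(2) by blast
  moreover have "c y (rep D2) = quot_color c B D2"
    using Pmax_cross_color[OF ecg B(1) D2(1) B(4) B(2) reps(2)] .
  ultimately show ?thesis
    unfolding quot_color_rep by simp
qed

text \<open>A module Y overlapping the union without containing it is left along a d-edge D1 D2 of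
  the component; since Y is a module, the part of any vertex of Y outside the union is then
  joined to D2 by a d-edge as well.\<close>

lemma Union_color_component_strong:
  fixes c :: "'a \<Rightarrow> 'a \<Rightarrow> 'c" and d :: 'c
  assumes ecg: "ecg V c" and rf: "rainbow_free V c" and M: "strong_module V c M" "card M \<noteq> 1"
    and A1: "A1 \<in> Pmax V c M"
  defines "X \<equiv> {B \<in> Pmax V c M. (color_edge (Pmax V c M) (quot_color c) d)\<^sup>*\<^sup>* A1 B}"
  shows "strong_module V c (\<Union>X)"
  unfolding strong_module_def
proof (intro conjI allI impI)
  let ?P = "Pmax V c M" and ?E = "color_edge (Pmax V c M) (quot_color c) d"
  have sym: "\<forall>A\<in>?P. \<forall>B\<in>?P. quot_color c A B = quot_color c B A"
    using quot_color_sym[OF ecg M(1)] by (simp add: quot_vertices_Pmax[OF M(2)])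
  have "A1 \<in> X"
    unfolding X_def using A1 by simp
  then show "\<Union>X \<noteq> {}"
    using strong_module_nonempty[OF Pmax_strong[OF A1]] by blast
  show module: "is_module V c (\<Union>X)"
    unfolding X_def by (rule Union_color_component_module[OF ecg rf M A1])
  fix Y assume Y: "is_module V c Y"
  show "\<Union>X \<subseteq> Y \<or> Y \<subseteq> \<Union>X \<or> \<Union>X \<inter> Y = {}"
  proof (rule ccontr)
    assume overlap: "\<not> ?thesis"
    have inside: "A \<subseteq> Y" if "A \<in> X" "A \<inter> Y \<noteq> {}" for A
    proof -
      have "A \<in> ?P"
        using that(1) unfolding X_def by simp
      then have "A \<subseteq> Y \<or> Y \<subseteq> A"
        using strong_module_overlap[OF Pmax_strong Y] that(2) by blast
      moreover have "A \<subseteq> \<Union>X"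
        using that(1) by blast
      ultimately show ?thesis
        using overlap by blast
    qed
    obtain A_in A_out where in_out: "A_in \<in> X" "A_in \<subseteq> Y" "A_out \<in> X" "\<not> A_out \<subseteq> Y"
      using overlap inside by blast
    have "?E\<^sup>*\<^sup>* A_in A_out"
      using in_out(1,3) color_reach_sym[OF sym] rtranclp_trans unfolding X_def by fast
    then obtain D1 D2 where D: "?E\<^sup>*\<^sup>* A_in D1" "?E D1 D2" "D1 \<subseteq> Y" "\<not> D2 \<subseteq> Y"
      using rtranclp_exit[of ?E A_in A_out "\<lambda>D. D \<subseteq> Y"] in_out(2,4) by blast
    have D12: "D1 \<in> ?P" "D2 \<in> ?P" "D1 \<noteq> D2" "quot_color c D1 D2 = d"
      using D(2) unfolding color_edge_def by simp_all
    have "?E\<^sup>*\<^sup>* A1 D2"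
      using in_out(1) D(1,2) unfolding X_def
      by (auto intro: rtranclp_trans rtranclp.rtrancl_into_rtrancl)
    then have "D2 \<in> X"
      unfolding X_def using D12(2) by simp
    then have "D2 \<inter> Y = {}"
      using inside D(4) by blast
    obtain y where y: "y \<in> Y" "y \<notin> \<Union>X"
      using overlap by blast
    have "\<Union>X \<subseteq> M"
      unfolding X_def using Pmax_psubset by blast
    then have "Y \<subseteq> M"
      using strong_module_overlap[OF M(1) Y] overlap by blast
    then obtain B where B: "B \<in> ?P" "y \<in> B"
      using Union_Pmax[OF _ M] ecg y(1) unfolding ecg_def by blast
    have "B \<notin> X"
      using B(2) y(2) by blast
    have "B \<noteq> D2"
      using \<open>B \<notin> X\<close> \<open>D2 \<in> X\<close> by blast
    then have "quot_color c B D2 = d"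
      using is_module_Pmax_color[OF ecg Y D12(1) D(3) D12(2) \<open>D2 \<inter> Y = {}\<close> B y(1)] D12(4)
      by simp
    then have "?E D2 B"
      unfolding color_edge_def using sym B(1) D12(2) \<open>B \<noteq> D2\<close> by simp
    with \<open>?E\<^sup>*\<^sup>* A1 D2\<close> have "B \<in> X"
      unfolding X_def using B(1) by simp
    with \<open>B \<notin> X\<close> show False
      by blast
  qed
qed

lemma Pmax_connected_color:
  assumes ecg: "ecg V c" and rf: "rainbow_free V c" and M: "strong_module V c M" "card M \<noteq> 1"
    and "d \<in> colors (Pmax V c M) (quot_color c)"
  shows "connected_color (Pmax V c M) (quot_color c) d"
proof -
  let ?P = "Pmax V c M" and ?R = "(color_edge (Pmax V c M) (quot_color c) d)\<^sup>*\<^sup>*"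
  obtain A1 A2 where A: "A1 \<in> ?P" "A2 \<in> ?P" "A1 \<noteq> A2" "quot_color c A1 A2 = d"
    using assms(5) unfolding colors_def by blast
  define X where "X = {B \<in> ?P. ?R A1 B}"
  have "B \<in> X" if B: "B \<in> ?P" for B
  proof (rule ccontr)
    assume "B \<notin> X"
    have "\<Union>X \<subseteq> M"
      unfolding X_def using Pmax_psubset by blast
    moreover obtain b where "b \<in> B"
      using strong_module_nonempty[OF Pmax_strong[OF B]] by blast
    then have "b \<notin> \<Union>X" "b \<in> M"
      using Pmax_disjoint[OF B] \<open>B \<notin> X\<close> Pmax_psubset[OF B] unfolding X_def by blast+
    ultimately have "\<Union>X \<subset> M"
      by blast
    moreover have "A1 \<subseteq> \<Union>X"
      unfolding X_def using A(1) by blast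
    ultimately have "\<Union>X = A1"
      using Pmax_maximal[OF A(1) Union_color_component_strong[OF ecg rf M A(1)]]
      unfolding X_def by blast
    moreover have "color_edge ?P (quot_color c) d A1 A2"
      unfolding color_edge_def using A by simp
    then have "A2 \<subseteq> \<Union>X"
      unfolding X_def using A(2) by blast
    ultimately show False
      using Pmax_disjoint[OF A(1,2,3)] strong_module_nonempty[OF Pmax_strong[OF A(2)]] by blast
  qed
  then have "?R A1 B" if "B \<in> ?P" for B
    using that unfolding X_def by blast
  moreover have sym: "\<forall>A\<in>?P. \<forall>B\<in>?P. quot_color c A B = quot_color c B A"
    using quot_color_sym[OF ecg M(1)] by (simp add: quot_vertices_Pmax[OF M(2)])
  ultimately show ?thesis
    unfolding connected_color_def using color_reach_sym[OF sym] rtranclp_trans by metis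
qed

lemma prime_quotient_two_le_card_colors:
  assumes prime: "prime_module V c M" and finQ: "finite (quot_vertices V c M)"
    and two: "2 \<le> card (quot_vertices V c M)"
  shows "2 \<le> card (colors (quot_vertices V c M) (quot_color c))"
proof -
  let ?Q = "quot_vertices V c M" and ?C = "colors (quot_vertices V c M) (quot_color c)"
  obtain A0 where "A0 \<in> ?Q"
    using ex_not_in_if_card_less[of "{}" ?Q] two by auto
  moreover obtain B0 where "B0 \<in> ?Q" "B0 \<notin> {A0}"
    using ex_not_in_if_card_less[of "{A0}" ?Q] two by auto
  ultimately have "quot_color c A0 B0 \<in> ?C"
    unfolding colors_def by auto
  moreover obtain A B where "A \<in> ?Q" "B \<in> ?Q" "A \<noteq> B" "quot_color c A B \<noteq> quot_color c A0 B0"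
    using prime two unfolding prime_module_def by force
  then have "quot_color c A B \<in> ?C"
    unfolding colors_def by auto
  ultimately have "{quot_color c A0 B0, quot_color c A B} \<subseteq> ?C"
    by simp
  then have "card {quot_color c A0 B0, quot_color c A B} \<le> card ?C"
    by (rule card_mono[OF finite_colors[OF finQ]])
  with \<open>quot_color c A B \<noteq> quot_color c A0 B0\<close> show ?thesis
    by simp
qed

lemma prime_quotient_two_colors:
  assumes ecg: "ecg V c" and rf: "rainbow_free V c" and prime: "prime_module V c M"
    and three: "3 \<le> card (quot_vertices V c M)"
  shows "card (colors (quot_vertices V c M) (quot_color c)) = 2"
proof -
  let ?Q = "quot_vertices V c M" and ?C = "colors (quot_vertices V c M) (quot_color c)"
  have M: "strong_module V c M"
    using prime unfolding prime_module_def by blast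
  have "card M \<noteq> 1"
    using three unfolding quot_vertices_def by auto
  then have Q: "?Q = Pmax V c M"
    by (rule quot_vertices_Pmax)
  have finQ: "finite ?Q"
    using finite_quot_vertices[OF _ M] ecg unfolding ecg_def by blast
  have "\<not> 3 \<le> card ?C"
  proof
    assume "3 \<le> card ?C"
    then obtain d where "d \<in> ?C" "\<not> connected_color ?Q (quot_color c) d"
      using rainbow_free_disconnected_color[OF finQ quot_color_sym[OF ecg M]
          rainbow_free_quotient[OF M rf]]
      by blast
    then show False
      using Pmax_connected_color[OF ecg rf M \<open>card M \<noteq> 1\<close>] unfolding Q by blast
  qed
  moreover have "2 \<le> card ?C"
    using prime_quotient_two_le_card_colors[OF prime finQ] three by simp
  ultimately show ?thesis
    by simp
qed

lemma rainbow_free_prime_quotient_ce_perm_graph: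
  assumes ecg: "ecg V c" and simple: "\<forall>i\<in>colors V c. simple_perm_graph V (mono_edges c i)"
    and rf: "rainbow_free V c" and prime: "prime_module V c M"
  shows "ce_perm_graph (quot_vertices V c M) (quot_color c)"
proof -
  let ?Q = "quot_vertices V c M"
  have M: "strong_module V c M"
    using prime unfolding prime_module_def by blast
  have finQ: "finite ?Q"
    using finite_quot_vertices[OF _ M] ecg unfolding ecg_def by blast
  note rep = rep_quot_vertices[OF M]
  show ?thesis
  proof (cases "3 \<le> card ?Q")
    case True
    have "card (colors ?Q (quot_color c)) = 2"
      using prime_quotient_two_colors[OF ecg rf prime True] .
    then obtain a b where ab: "colors ?Q (quot_color c) = {a, b}" "a \<noteq> b"
      by (meson card_2_iff)
    then have "a \<in> colors ?Q (quot_color c)"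
      by simp
    then have "a \<in> colors V c"
      using colors_quotient_subset[OF M] by blast
    then obtain l pi where pg: "perm_graph_of V (mono_edges c a) l pi"
      using simple unfolding simple_perm_graph_def by blast
    then have "inj_on l V"
      unfolding perm_graph_of_def using bij_betw_imp_inj_on by blast
    then have "inj_on (int \<circ> l \<circ> rep) ?Q"
      using comp_inj_on[OF rep(1) inj_on_subset[OF _ rep(2)]] by (simp add: inj_on_def)
    have "strict_mono int"
      by (rule strict_monoI) simp
    then have "perm_graph_wrt V (mono_edges c a) (int \<circ> l)"
      using perm_graph_wrt_comp_mono perm_graph_of_imp_wrt[OF pg] by blast
    moreover have "\<forall>A\<in>?Q. \<forall>B\<in>?Q.
        mono_edges (quot_color c) a A B \<longleftrightarrow> mono_edges c a (rep A) (rep B)"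
      using inj_on_eq_iff[OF rep(1)] unfolding mono_edges_def quot_color_rep by auto
    ultimately have "perm_graph_wrt ?Q (mono_edges (quot_color c) a) (int \<circ> l \<circ> rep)"
      using perm_graph_wrt_transfer[OF rep] by blast
    then show ?thesis
      using ce_perm_graph_two_colors[OF finQ ab] \<open>inj_on (int \<circ> l \<circ> rep) ?Q\<close> by blast
  next
    case False
    then show ?thesis
      using ce_perm_graph_at_most_two[OF finQ _ quot_color_sym[OF ecg M]] by simp
  qed
qed

section \<open>Substitution\<close>

lemma inj_on_part_pair:
  assumes "\<forall>u\<in>M. part u \<in> P \<and> u \<in> part u" "inj_on f P" "\<forall>A\<in>P. inj_on (g A) A"
  shows "inj_on (\<lambda>u. (f (part u), g (part u) u)) M"
proof (rule inj_onI)
  fix u v assume "u \<in> M" "v \<in> M" and eq: "(f (part u), g (part u) u) = (f (part v), g (part v) v)"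
  then have "part u \<in> P" "part v \<in> P" "u \<in> part u" "v \<in> part v"
    using assms(1) by auto
  moreover have "part u = part v"
    using eq inj_onD[OF assms(2)] calculation by simp
  ultimately show "u = v"
    using eq inj_onD[OF bspec[OF assms(3)]] by simp
qed

text \<open>Vertices are compared first through their parts in the quotient and then inside their
  part, both for the labeling and for the realizers.\<close>

lemma ce_perm_labeling_substitution:
  fixes c :: "'a \<Rightarrow> 'a \<Rightarrow> 'c" and c' :: "'a set \<Rightarrow> 'a set \<Rightarrow> 'c"
    and L :: "'a set \<Rightarrow> 'b::linorder" and LA :: "'a set \<Rightarrow> 'a \<Rightarrow> 'd::linorder"
  assumes disjoint: "\<forall>A\<in>P. \<forall>B\<in>P. A \<noteq> B \<longrightarrow> A \<inter> B = {}" and cover: "\<Union>P = M"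
    and cross: "\<forall>A\<in>P. \<forall>B\<in>P. A \<noteq> B \<longrightarrow> (\<forall>u\<in>A. \<forall>v\<in>B. c u v = c' A B)"
    and quotient: "ce_perm_labeling P c' L" and parts: "\<forall>A\<in>P. ce_perm_labeling A c (LA A)"
  shows "\<exists>l :: 'a \<Rightarrow> 'b \<times> 'd. ce_perm_labeling M c l"
proof -
  define part where "part u = (SOME A. A \<in> P \<and> u \<in> A)" for u
  have part: "part u \<in> P \<and> u \<in> part u" if "u \<in> M" for u
  proof -
    have "\<exists>A. A \<in> P \<and> u \<in> A"
      using that cover by blast
    then show ?thesis
      unfolding part_def by (rule someI_ex)
  qed
  obtain PQ :: "'c \<Rightarrow> 'a set \<Rightarrow> 'b" where PQ: "\<forall>i. inj_on (PQ i) P \<and>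
      (\<forall>A\<in>P. \<forall>B\<in>P. L B < L A \<longrightarrow> (mono_edges c' i A B \<longleftrightarrow> PQ i A < PQ i B))"
    using ce_perm_labeling_realizers[OF quotient] by (rule exE)
  have "\<forall>A\<in>P. \<exists>q :: 'c \<Rightarrow> 'a \<Rightarrow> 'd. \<forall>i. inj_on (q i) A \<and>
      (\<forall>u\<in>A. \<forall>v\<in>A. LA A v < LA A u \<longrightarrow> (mono_edges c i u v \<longleftrightarrow> q i u < q i v))"
    using parts ce_perm_labeling_realizers by blast
  then obtain PA :: "'a set \<Rightarrow> 'c \<Rightarrow> 'a \<Rightarrow> 'd" where PA: "\<forall>A\<in>P. \<forall>i. inj_on (PA A i) A \<and>
      (\<forall>u\<in>A. \<forall>v\<in>A. LA A v < LA A u \<longrightarrow> (mono_edges c i u v \<longleftrightarrow> PA A i u < PA A i v))"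
    by (rule bchoice[THEN exE])
  define lab where "lab u = (L (part u), LA (part u) u)" for u
  define p where "p i u = (PQ i (part u), PA (part u) i u)" for i u
  have "inj_on lab M"
    unfolding lab_def using inj_on_part_pair[of M part P L LA] part quotient parts
    unfolding ce_perm_labeling_def by blast
  moreover have "perm_graph_wrt M (mono_edges c i) lab" for i
    unfolding perm_graph_wrt_def
  proof (intro exI conjI ballI impI)
    show "inj_on (p i) M"
      unfolding p_def using inj_on_part_pair[of M part P "PQ i" "\<lambda>A. PA A i"] part PQ PA by blast
    fix u v assume "u \<in> M" "v \<in> M" and less: "lab v < lab u"
    define A where "A = part u"
    define B where "B = part v"
    have AB: "A \<in> P" "u \<in> A" "B \<in> P" "v \<in> B"
      using part \<open>u \<in> M\<close> \<open>v \<in> M\<close> unfolding A_def B_def by auto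
    show "mono_edges c i u v \<longleftrightarrow> p i u < p i v"
    proof (cases "A = B")
      case False
      have "L A \<noteq> L B" "PQ i A \<noteq> PQ i B"
        using False AB quotient PQ inj_onD unfolding ce_perm_labeling_def by metis+
      then have "L B < L A" and p_less: "p i u < p i v \<longleftrightarrow> PQ i A < PQ i B"
        using less unfolding lab_def p_def A_def B_def by (auto simp: less_prod_def')
      have "u \<noteq> v"
        using False AB disjoint by blast
      then have "mono_edges c i u v \<longleftrightarrow> mono_edges c' i A B"
        using cross AB False unfolding mono_edges_def by simp
      also have "\<dots> \<longleftrightarrow> PQ i A < PQ i B"
        using PQ AB \<open>L B < L A\<close> by blast
      finally show ?thesis
        using p_less by simp
    next
      case True
      then have "LA A v < LA A u" and p_less: "p i u < p i v \<longleftrightarrow> PA A i u < PA A i v"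
        using less unfolding lab_def p_def A_def B_def by (auto simp: less_prod_def')
      then show ?thesis
        using PA AB True by blast
    qed
  qed
  ultimately show ?thesis
    unfolding ce_perm_labeling_def by blast
qed

lemma ce_perm_graph_Pmax_quotient:
  assumes ecg: "ecg V c"
    and prime_quotients:
      "\<forall>M. prime_module V c M \<longrightarrow> ce_perm_graph (quot_vertices V c M) (quot_color c)"
    and M: "strong_module V c M" "card M \<noteq> 1"
  shows "ce_perm_graph (Pmax V c M) (quot_color c)"
proof (cases "prime_module V c M")
  case True
  then show ?thesis
    using prime_quotients quot_vertices_Pmax[OF M(2)] by metis
next
  case False
  then have "\<exists>col. \<forall>A\<in>Pmax V c M. \<forall>B\<in>Pmax V c M. A \<noteq> B \<longrightarrow> quot_color c A B = col"
    using M unfolding prime_module_def quot_vertices_Pmax[OF M(2)] by blast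
  moreover have "finite (Pmax V c M)"
    using finite_quot_vertices[OF _ M(1)] ecg quot_vertices_Pmax[OF M(2)] unfolding ecg_def by metis
  ultimately show ?thesis
    using ce_perm_graph_monochromatic by metis
qed

lemma ce_perm_graph_from_Pmax:
  assumes ecg: "ecg V c" and M: "strong_module V c M" "card M \<noteq> 1"
    and quotient: "ce_perm_graph (Pmax V c M) (quot_color c)"
    and parts: "\<forall>A\<in>Pmax V c M. ce_perm_graph A c"
  shows "ce_perm_graph M c"
proof -
  let ?P = "Pmax V c M"
  have finV: "finite V"
    using ecg unfolding ecg_def by blast
  have finM: "finite M"
    using finite_subset[OF strong_module_subset[OF M(1)] finV] .
  obtain L :: "'a set \<Rightarrow> nat" where L: "ce_perm_labeling ?P (quot_color c) L"
    using ce_perm_graph_imp_labeling finite_quot_vertices[OF finV M(1)] quot_vertices_Pmax[OF M(2)]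
      quotient by metis
  have "\<forall>A\<in>?P. \<exists>l :: 'a \<Rightarrow> nat. ce_perm_labeling A c l"
  proof
    fix A assume A: "A \<in> ?P"
    have "finite A"
      using finite_subset[OF psubset_imp_subset[OF Pmax_psubset[OF A]] finM] .
    then show "\<exists>l :: 'a \<Rightarrow> nat. ce_perm_labeling A c l"
      using ce_perm_graph_imp_labeling parts A by metis
  qed
  then obtain LA :: "'a set \<Rightarrow> 'a \<Rightarrow> nat" where LA: "\<forall>A\<in>?P. ce_perm_labeling A c (LA A)"
    by (rule bchoice[THEN exE])
  have "\<forall>A\<in>?P. \<forall>B\<in>?P. A \<noteq> B \<longrightarrow> A \<inter> B = {}"
    using Pmax_disjoint by blast
  moreover have "\<forall>A\<in>?P. \<forall>B\<in>?P. A \<noteq> B \<longrightarrow> (\<forall>u\<in>A. \<forall>v\<in>B. c u v = quot_color c A B)"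
    using Pmax_cross_color[OF ecg] by blast
  ultimately obtain l :: "'a \<Rightarrow> nat \<times> nat" where "ce_perm_labeling M c l"
    using ce_perm_labeling_substitution[OF _ Union_Pmax[OF finV M] _ L LA] by blast
  then show ?thesis
    by (rule ce_perm_graph_if_labeling[OF finM])
qed

lemma strong_module_ce_perm_graph:
  assumes ecg: "ecg V c"
    and prime_quotients:
      "\<forall>M. prime_module V c M \<longrightarrow> ce_perm_graph (quot_vertices V c M) (quot_color c)"
    and "strong_module V c M"
  shows "ce_perm_graph M c"
  using assms(3)
proof (induction "card M" arbitrary: M rule: less_induct)
  case less
  have finM: "finite M"
    using finite_subset[OF strong_module_subset[OF less.prems]] ecg unfolding ecg_def by blast
  show ?case
  proof (cases "card M = 1")
    case True
    then show ?thesis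
      using ce_perm_graph_monochromatic[OF finM] by (auto simp: card_1_singleton_iff)
  next
    case False
    have "ce_perm_graph A c" if A: "A \<in> Pmax V c M" for A
      using less.hyps[OF psubset_card_mono[OF finM Pmax_psubset[OF A]] Pmax_strong[OF A]] .
    then show ?thesis
      using ce_perm_graph_from_Pmax[OF ecg less.prems False]
        ce_perm_graph_Pmax_quotient[OF ecg prime_quotients less.prems False] by blast
  qed
qed

theorem theorem4p1:
  fixes V :: "'a set" and c :: "'a \<Rightarrow> 'a \<Rightarrow> 'c"
  assumes "ecg V c"
  defines "st_i \<equiv> ce_perm_graph V c"
      and "st_ii \<equiv> (\<forall>W. W \<subseteq> V \<and> W \<noteq> {} \<longrightarrow> ce_perm_graph W c)"
      and "st_iii \<equiv> (\<forall>M. strong_module V c M \<longrightarrow>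
                        ce_perm_graph (quot_vertices V c M) (quot_color c))"
      and "st_iv \<equiv> (\<forall>M. prime_module V c M \<longrightarrow>
                        ce_perm_graph (quot_vertices V c M) (quot_color c)) \<and>
                   (\<forall>M. prime_module V c M \<and> card (quot_vertices V c M) \<ge> 3 \<longrightarrow>
                        card (colors (quot_vertices V c M) (quot_color c)) = 2)"
      and "st_v \<equiv> (\<forall>i\<in>colors V c. simple_perm_graph V (mono_edges c i)) \<and>
                  \<not> (\<exists>x y z. rainbow_triangle V c x y z)"
  shows "(st_i \<longleftrightarrow> st_ii) \<and> (st_i \<longleftrightarrow> st_iii) \<and> (st_i \<longleftrightarrow> st_iv) \<and> (st_i \<longleftrightarrow> st_v)"
proof -
  let ?prime_quotients =
    "\<forall>M. prime_module V c M \<longrightarrow> ce_perm_graph (quot_vertices V c M) (quot_color c)"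
  have fin: "finite V" and ne: "V \<noteq> {}"
    using assms(1) unfolding ecg_def by simp_all
  have prime_strong: "prime_module V c M \<Longrightarrow> strong_module V c M" for M
    unfolding prime_module_def by blast
  have i_iii: "st_i \<Longrightarrow> st_iii"
    unfolding st_i_def st_iii_def using ce_perm_graph_quotient[OF assms(1)] by blast
  have iii_prime: "st_iii \<Longrightarrow> ?prime_quotients"
    unfolding st_iii_def using prime_strong by blast
  have prime_i: "?prime_quotients \<Longrightarrow> st_i"
    unfolding st_i_def using strong_module_ce_perm_graph[OF assms(1) _ strong_module_whole[OF ne]] .
  have i_rf: "st_i \<Longrightarrow> rainbow_free V c"
    unfolding st_i_def by (rule ce_perm_graph_rainbow_free[OF assms(1)])
  have "st_i \<longleftrightarrow> st_ii"
    unfolding st_i_def st_ii_def using ce_perm_graph_induced[OF fin] ne by blast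
  moreover have "st_i \<longleftrightarrow> st_iv"
    unfolding st_iv_def
    using i_iii iii_prime prime_i i_rf prime_quotient_two_colors[OF assms(1)] by blast
  moreover have "st_i \<longleftrightarrow> st_v"
    unfolding st_v_def rainbow_free_def[symmetric]
    using prime_i i_rf rainbow_free_prime_quotient_ce_perm_graph[OF assms(1)]
    unfolding st_i_def ce_perm_graph_def simple_perm_graph_def by blast
  ultimately show ?thesis
    using i_iii iii_prime prime_i by blast
qed

end
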